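(* Let $\mathcal G$ be a finite reduced collection of allowed words of $\Sigma_A$ (no word of $\mathcal G$ is a subword of another). Write $\mathcal G\setminus\Sigma$ for the words of $\mathcal G$ of length $\ge2$ and $\Sigma\setminus\mathcal G$ for the symbols not belonging to $\mathcal G$. For $i\in\Sigma\setminus\mathcal G$ let $F_i(z)=\sum_{n\ge1}\mu(n,i)z^n$, where $\mu(n,i)$ is the total $\mu$-measure of cylinders based at allowed words of length $n$ ending with $i$ and containing no word of $\mathcal G$ as a subword. For $u\in\mathcal G\setminus\Sigma$ let $G_u(z)=\sum_{n\ge1}\nu(n,u)z^n$, where $\nu(n,u)$ is the total $\mu$-measure of cylinders based at allowed words of length $n$ which contain no word of $\mathcal G$ as a subword except for a single occurrence of $u$ at the end. Then, as formal power series, for each $i\in\Sigma\setminus\mathcal G$ and each $u\in\mathcal G\setminus\Sigma$: $$F_i(z)-p_iz+\sum_{v\in\mathcal G\setminus\Sigma}\chi_{i,t(v)}G_v(z)=z\sum_{j\in\Sigma\setminus\mathcal G}F_j(z)P_{ji},$$ $$z^{|u|-1}\delta_uF_{i(u)}(z)=\sum_{v\in\mathcal G\setminus\Sigma}\tilde\tau_{v,u}(z)G_v(z).$$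
   Context: Let $\Sigma=\{1,\dots,N\}$, $A$ an irreducible $N\times N$ $0$–$1$ matrix, $\Sigma_A=\{x\in\Sigma^{\mathbb N}:A_{x_nx_{n+1}}=1\ \forall n\}$. A word is allowed if it occurs in some element of $\Sigma_A$; $C_w$ is the set of $x\in\Sigma_A$ beginning with $w$. $P$ is a row-stochastic matrix with $P_{ij}>0$ iff $A_{ij}=1$, $\mathbf p=(p_1,\dots,p_N)^T$ its stationary vector, $\mu=\mu_P$ the Markov measure $\mu(C_w)=p_{w_1}P_{w_1w_2}\cdots P_{w_{n-1}w_n}$. For a word $u$: $|u|$ is its length, $i(u)$ its first symbol, $t(u)$ its last symbol; $\chi_{a,b}=1$ if $a=b$ and $0$ otherwise; $\delta_u=P_{u_1u_2}\cdots P_{u_{\ell-1}u_\ell}$ for $u=u_1\cdots u_\ell$. Weighted correlation polynomial: for $u=u_1\cdots u_\ell$, $v=v_1\cdots v_m$ with $\ell,m\ge2$ and $0\le s\le\ell-1$, write $s\in(u,v)$ if $\ell-s\le m$ and $u_{s+1}\cdots u_\ell=v_1\cdots v_{\ell-s}$; $c_{s,u,v}=1$ if $s\in(u,v)$ and $0$ otherwise; $\delta_{s,u,v}=\prod_{j=\ell-s}^{m-1}P_{v_jv_{j+1}}$ (empty product $=1$). Then $\tau_{u,v}(z)=\sum_s c_{s,u,v}\delta_{s,u,v}z^{m+s-\ell}$, the sum over $0\le s\le\ell-1$ if $\ell<m$ and over $\ell-m\le s\le\ell-1$ if $\ell\ge m$. Finally $\tilde\tau_{v,u}(z)=\tau_{v,u}(z)-z^{|u|-1}c_{|v|-1,v,u}\delta_u$.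 *)

theory Defs
  imports Complex_Main "HOL-Library.Sublist" "HOL-Computational_Algebra.Formal_Power_Series"
begin

text \<open>Alphabet \<Sigma> = {1..N}; matrices are functions nat => nat => _, used on \<Sigma> only.
Words are lists; the word u_1...u_l is the list [u_1,...,u_l], so u_k = u ! (k-1).\<close>

definition alphabet :: "nat \<Rightarrow> nat set" where
  "alphabet N = {1..N}"

fun apow :: "nat \<Rightarrow> (nat \<Rightarrow> nat \<Rightarrow> nat) \<Rightarrow> nat \<Rightarrow> nat \<Rightarrow> nat \<Rightarrow> nat" where
  "apow N A 0 i j = (if i = j then 1 else 0)"
| "apow N A (Suc n) i j = (\<Sum>k\<in>alphabet N. apow N A n i k * A k j)"

definition irreducible_mat :: "nat \<Rightarrow> (nat \<Rightarrow> nat \<Rightarrow> nat) \<Rightarrow> bool" where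
  "irreducible_mat N A \<longleftrightarrow>
     (\<forall>i\<in>alphabet N. \<forall>j\<in>alphabet N. \<exists>n>0. apow N A n i j > 0)"

definition zero_one_mat :: "nat \<Rightarrow> (nat \<Rightarrow> nat \<Rightarrow> nat) \<Rightarrow> bool" where
  "zero_one_mat N A \<longleftrightarrow> (\<forall>i\<in>alphabet N. \<forall>j\<in>alphabet N. A i j \<in> {0, 1})"

definition SigmaA :: "nat \<Rightarrow> (nat \<Rightarrow> nat \<Rightarrow> nat) \<Rightarrow> (nat \<Rightarrow> nat) set" where
  "SigmaA N A = {x. (\<forall>n. x n \<in> alphabet N) \<and> (\<forall>n. A (x n) (x (Suc n)) = 1)}"

definition allowed :: "nat \<Rightarrow> (nat \<Rightarrow> nat \<Rightarrow> nat) \<Rightarrow> nat list \<Rightarrow> bool" where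
  "allowed N A w \<longleftrightarrow> (\<exists>x\<in>SigmaA N A. \<exists>k. w = map x [k..<k + length w])"

definition row_stochastic_compatible ::
  "nat \<Rightarrow> (nat \<Rightarrow> nat \<Rightarrow> nat) \<Rightarrow> (nat \<Rightarrow> nat \<Rightarrow> real) \<Rightarrow> bool" where
  "row_stochastic_compatible N A P \<longleftrightarrow>
     (\<forall>i\<in>alphabet N. \<forall>j\<in>alphabet N. P i j \<ge> 0 \<and> (P i j > 0 \<longleftrightarrow> A i j = 1)) \<and>
     (\<forall>i\<in>alphabet N. (\<Sum>j\<in>alphabet N. P i j) = 1)"

definition stationary :: "nat \<Rightarrow> (nat \<Rightarrow> nat \<Rightarrow> real) \<Rightarrow> (nat \<Rightarrow> real) \<Rightarrow> bool" where
  "stationary N P p \<longleftrightarrow>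
     (\<forall>i\<in>alphabet N. p i \<ge> 0) \<and> (\<Sum>i\<in>alphabet N. p i) = 1 \<and>
     (\<forall>j\<in>alphabet N. (\<Sum>i\<in>alphabet N. p i * P i j) = p j)"

definition delta :: "(nat \<Rightarrow> nat \<Rightarrow> real) \<Rightarrow> nat list \<Rightarrow> real" where
  "delta P u = (\<Prod>k\<in>{0..<length u - 1}. P (u ! k) (u ! (k + 1)))"

text \<open>Markov measure of the cylinder C_w: mu(C_w) = p_{w1} P_{w1 w2} ... P_{w(n-1) wn}.\<close>
definition markov_cyl :: "(nat \<Rightarrow> real) \<Rightarrow> (nat \<Rightarrow> nat \<Rightarrow> real) \<Rightarrow> nat list \<Rightarrow> real" where
  "markov_cyl p P w = p (hd w) * delta P w"

definition reduced :: "nat list set \<Rightarrow> bool" where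
  "reduced G \<longleftrightarrow> (\<forall>u\<in>G. \<forall>v\<in>G. u \<noteq> v \<longrightarrow> \<not> sublist u v)"

definition avoids :: "nat list set \<Rightarrow> nat list \<Rightarrow> bool" where
  "avoids G w \<longleftrightarrow> (\<forall>g\<in>G. \<not> sublist g w)"

definition mu_end :: "nat \<Rightarrow> (nat \<Rightarrow> nat \<Rightarrow> nat) \<Rightarrow> (nat \<Rightarrow> real) \<Rightarrow> (nat \<Rightarrow> nat \<Rightarrow> real)
    \<Rightarrow> nat list set \<Rightarrow> nat \<Rightarrow> nat \<Rightarrow> real" where
  "mu_end N A p P G n i =
     (\<Sum>w\<in>{w. length w = n \<and> set w \<subseteq> alphabet N \<and> allowed N A w \<and> w \<noteq> [] \<and> last w = i
              \<and> avoids G w}. markov_cyl p P w)"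

definition first_at_end :: "nat list set \<Rightarrow> nat list \<Rightarrow> nat list \<Rightarrow> bool" where
  "first_at_end G u w \<longleftrightarrow> suffix u w \<and> (\<forall>ps ss. w = ps @ u @ ss \<longrightarrow> ss = []) \<and>
     (\<forall>g\<in>G. g \<noteq> u \<longrightarrow> \<not> sublist g w)"

definition nu_end :: "nat \<Rightarrow> (nat \<Rightarrow> nat \<Rightarrow> nat) \<Rightarrow> (nat \<Rightarrow> real) \<Rightarrow> (nat \<Rightarrow> nat \<Rightarrow> real)
    \<Rightarrow> nat list set \<Rightarrow> nat \<Rightarrow> nat list \<Rightarrow> real" where
  "nu_end N A p P G n u =
     (\<Sum>w\<in>{w. length w = n \<and> set w \<subseteq> alphabet N \<and> allowed N A w \<and> first_at_end G u w}.
        markov_cyl p P w)"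

definition F_series :: "nat \<Rightarrow> (nat \<Rightarrow> nat \<Rightarrow> nat) \<Rightarrow> (nat \<Rightarrow> real) \<Rightarrow> (nat \<Rightarrow> nat \<Rightarrow> real)
    \<Rightarrow> nat list set \<Rightarrow> nat \<Rightarrow> real fps" where
  "F_series N A p P G i = Abs_fps (\<lambda>n. if n \<ge> 1 then mu_end N A p P G n i else 0)"

definition G_series :: "nat \<Rightarrow> (nat \<Rightarrow> nat \<Rightarrow> nat) \<Rightarrow> (nat \<Rightarrow> real) \<Rightarrow> (nat \<Rightarrow> nat \<Rightarrow> real)
    \<Rightarrow> nat list set \<Rightarrow> nat list \<Rightarrow> real fps" where
  "G_series N A p P G u = Abs_fps (\<lambda>n. if n \<ge> 1 then nu_end N A p P G n u else 0)"

definition corr_c :: "nat \<Rightarrow> nat list \<Rightarrow> nat list \<Rightarrow> real" where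
  "corr_c s u v = (if length u - s \<le> length v \<and> drop s u = take (length u - s) v then 1 else 0)"

text \<open>delta_{s,u,v} = prod_{j=l-s}^{m-1} P_{v_j v_{j+1}} (1-indexed: v_j = v ! (j-1)).\<close>
definition corr_delta :: "(nat \<Rightarrow> nat \<Rightarrow> real) \<Rightarrow> nat \<Rightarrow> nat list \<Rightarrow> nat list \<Rightarrow> real" where
  "corr_delta P s u v = (\<Prod>j\<in>{length u - s..length v - 1}. P (v ! (j - 1)) (v ! j))"

definition tau :: "(nat \<Rightarrow> nat \<Rightarrow> real) \<Rightarrow> nat list \<Rightarrow> nat list \<Rightarrow> real fps" where
  "tau P u v =
     (let l = length u; m = length v;
          S = (if l < m then {0..l - 1} else {l - m..l - 1})
      in (\<Sum>s\<in>S. fps_const (corr_c s u v * corr_delta P s u v) * fps_X ^ (m + s - l)))"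

definition tau_tilde :: "(nat \<Rightarrow> nat \<Rightarrow> real) \<Rightarrow> nat list \<Rightarrow> nat list \<Rightarrow> real fps" where
  "tau_tilde P v u =
     tau P v u - fps_X ^ (length u - 1) * fps_const (corr_c (length v - 1) v u * delta P u)"

end

(*
  Both identities are compared coefficientwise: the coefficient of z^n on either side is a
  sum of Markov weights of words of length n.

  For the first, take the allowed words of length n + 1 ending in i whose first n letters avoid G.
  Splitting off the last letter, their total weight is the sum of mu(n, j) P_ji.  On the other
  hand such a word either avoids G, or the only word of G it contains is a suffix v with t(v) = i
  (unique because G is reduced, and of length at least 2 because i is not in G).

  For the second, extend a G-avoiding word w ending in i(u) by the rest of u.  The shortest prefix x
  of the result that contains a word of G ends with the unique occurrence of some v in G, and v
  overlaps u with a shift s (v cannot lie inside u, again by reducedness).  The map w |-> (v, s, x)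
  is a bijection and delta_{s,v,u} mu(C_x) = delta_u mu(C_w).  The shift s = |v| - 1, an overlap in
  the single letter i(u), never occurs since w avoids G: this is the term removed from tau.
*)

theory Submission
  imports Defs
begin

unbundle fps_syntax

lemma allowed_iff_nth: "allowed N A w \<longleftrightarrow> (\<exists>x\<in>SigmaA N A. \<forall>j<length w. w ! j = x j)"
proof
  assume "allowed N A w"
  then obtain x k where x: "x \<in> SigmaA N A" "w = map x [k..<k + length w]"
    unfolding allowed_def by auto
  have "(\<lambda>n. x (n + k)) \<in> SigmaA N A" using x(1) by (simp add: SigmaA_def)
  moreover have "\<forall>j<length w. w ! j = x (j + k)"
    by (subst x(2)) (simp add: add.commute)
  ultimately show "\<exists>x\<in>SigmaA N A. \<forall>j<length w. w ! j = x j"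
    by (auto intro!: bexI[of _ "\<lambda>n. x (n + k)"])
next
  assume "\<exists>x\<in>SigmaA N A. \<forall>j<length w. w ! j = x j"
  then obtain x where x: "x \<in> SigmaA N A" "\<forall>j<length w. w ! j = x j" by blast
  have "w = map x [0..<0 + length w]" by (rule nth_equalityI) (use x(2) in auto)
  with x(1) show "allowed N A w" unfolding allowed_def by (intro bexI[of _ x] exI[of _ 0])
qed

lemma allowed_take: "allowed N A w \<Longrightarrow> allowed N A (take k w)"
  unfolding allowed_iff_nth by auto

lemma allowed_butlast: "allowed N A w \<Longrightarrow> allowed N A (butlast w)"
  by (simp add: butlast_conv_take allowed_take)

lemma allowed_set_subset: "allowed N A w \<Longrightarrow> set w \<subseteq> alphabet N"
  unfolding allowed_iff_nth SigmaA_def by (auto simp: in_set_conv_nth)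

lemma allowed_nth_transition: "allowed N A w \<Longrightarrow> Suc j < length w \<Longrightarrow> A (w ! j) (w ! Suc j) = 1"
  unfolding allowed_iff_nth SigmaA_def by auto

lemma allowed_append_tl:
  assumes a: "allowed N A a" and b: "allowed N A b" and "a \<noteq> []" "b \<noteq> []" and "last a = hd b"
  shows "allowed N A (a @ tl b)"
proof -
  obtain x where x: "x \<in> SigmaA N A" "\<forall>j<length a. a ! j = x j" using a unfolding allowed_iff_nth by blast
  obtain y where y: "y \<in> SigmaA N A" "\<forall>j<length b. b ! j = y j" using b unfolding allowed_iff_nth by blast
  have junction: "x (length a - 1) = y 0"
    using assms x(2) y(2) by (simp add: last_conv_nth hd_conv_nth)
  define z where "z n = (if n < length a then x n else y (n + 1 - length a))" for n
  have "z \<in> SigmaA N A"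
    unfolding SigmaA_def
  proof (intro CollectI conjI allI)
    fix n
    show "z n \<in> alphabet N" using x(1) y(1) by (simp add: z_def SigmaA_def)
    consider "Suc n < length a" | "Suc n = length a" | "length a \<le> n" by linarith
    then show "A (z n) (z (Suc n)) = 1"
    proof cases
      case 1
      then show ?thesis using x(1) by (simp add: z_def SigmaA_def)
    next
      case 2
      then have "n = length a - 1" "Suc (Suc n) - length a = 1" by simp_all
      then show ?thesis using y(1) junction 2 by (simp add: z_def SigmaA_def)
    next
      case 3
      then have "Suc n + 1 - length a = Suc (n + 1 - length a)" by simp
      then show ?thesis using y(1) 3 by (simp add: z_def SigmaA_def)
    qed
  qed
  moreover have "(a @ tl b) ! j = z j" if j: "j < length (a @ tl b)" for j
  proof (cases "j < length a")
    case False
    then have "(a @ tl b) ! j = b ! (j + 1 - length a)" using j \<open>b \<noteq> []\<close>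
      by (simp add: nth_append nth_tl Suc_diff_le)
    then show ?thesis using False j y(2) by (simp add: z_def)
  qed (use x(2) in \<open>simp add: z_def nth_append\<close>)
  ultimately show ?thesis unfolding allowed_iff_nth by blast
qed

lemma apow_pos_imp_successor:
  assumes zo: "zero_one_mat N A" and i: "i \<in> alphabet N"
  shows "j \<in> alphabet N \<Longrightarrow> apow N A (Suc n) i j > 0 \<Longrightarrow> \<exists>k\<in>alphabet N. A i k = 1"
proof (induction n arbitrary: j)
  case 0
  then have "(\<Sum>k\<in>alphabet N. (if i = k then 1 else 0) * A k j) > 0" by simp
  then obtain k where "k \<in> alphabet N" "(if i = k then 1 else 0) * A k j > 0"
    by (metis (no_types, lifting) not_gr0 sum.neutral)
  then have "A i j = 1" using zo i 0 unfolding zero_one_mat_def by (fastforce split: if_splits)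
  then show ?case using 0 by blast
next
  case (Suc n)
  then have "(\<Sum>k\<in>alphabet N. apow N A (Suc n) i k * A k j) > 0" by simp
  then obtain k where "k \<in> alphabet N" "apow N A (Suc n) i k * A k j > 0"
    by (metis (no_types, lifting) not_gr0 sum.neutral)
  then show ?case using Suc.IH by simp
qed

lemma SigmaA_from_symbol:
  assumes zo: "zero_one_mat N A" and irr: "irreducible_mat N A" and i: "i \<in> alphabet N"
  shows "\<exists>y\<in>SigmaA N A. y 0 = i"
proof -
  have "\<exists>k. k \<in> alphabet N \<and> A a k = 1" if a: "a \<in> alphabet N" for a
  proof -
    obtain n where "n > 0" "apow N A n a a > 0" using irr a unfolding irreducible_mat_def by blast
    then obtain m where "apow N A (Suc m) a a > 0" using gr0_implies_Suc by blast
    then show ?thesis using apow_pos_imp_successor[OF zo a a] by blast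
  qed
  then obtain succ where succ: "\<And>a. a \<in> alphabet N \<Longrightarrow> succ a \<in> alphabet N \<and> A a (succ a) = 1"
    by metis
  define y where "y n = (succ ^^ n) i" for n
  have y_in: "y n \<in> alphabet N" for n
    by (induction n) (use i succ in \<open>auto simp: y_def\<close>)
  have "A (y n) (y (Suc n)) = 1" for n using succ[OF y_in[of n]] by (simp add: y_def)
  then have "y \<in> SigmaA N A" unfolding SigmaA_def using y_in by blast
  then show ?thesis by (intro bexI[of _ y]) (simp_all add: y_def)
qed

lemma allowed_singleton:
  assumes "zero_one_mat N A" "irreducible_mat N A" "i \<in> alphabet N"
  shows "allowed N A [i]"
  using SigmaA_from_symbol[OF assms] unfolding allowed_iff_nth by auto

lemma allowed_transition_pair:
  assumes "zero_one_mat N A" "irreducible_mat N A" "i \<in> alphabet N" "j \<in> alphabet N" "A j i = 1"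
  shows "allowed N A [j, i]"
proof -
  obtain y where y: "y \<in> SigmaA N A" "y 0 = i" using SigmaA_from_symbol[OF assms(1-3)] by blast
  define z where "z n = (case n of 0 \<Rightarrow> j | Suc m \<Rightarrow> y m)" for n
  have "z \<in> SigmaA N A" using y assms(4,5) unfolding SigmaA_def
    by (auto simp: z_def split: nat.splits)
  moreover have "\<forall>k<2. [j,i] ! k = z k" using y by (auto simp: z_def less_2_cases_iff)
  ultimately show ?thesis unfolding allowed_iff_nth by auto
qed

lemma delta_singleton [simp]: "delta P [a] = 1"
  by (simp add: delta_def)

lemma delta_Cons_Cons [simp]: "delta P (a # b # r) = P a b * delta P (b # r)"
  unfolding delta_def by (simp only: length_Cons diff_Suc_1 prod.atLeast0_lessThan_Suc_shift) simp

lemma delta_append_tl: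
  "a \<noteq> [] \<Longrightarrow> b \<noteq> [] \<Longrightarrow> last a = hd b \<Longrightarrow> delta P (a @ tl b) = delta P a * delta P b"
proof (induction a rule: induct_list012)
  case (2 x)
  then have "x # tl b = b" by (cases b) auto
  then show ?case by simp
qed simp_all

lemma markov_cyl_append_tl:
  "a \<noteq> [] \<Longrightarrow> b \<noteq> [] \<Longrightarrow> last a = hd b \<Longrightarrow>
   markov_cyl p P (a @ tl b) = markov_cyl p P a * delta P b"
  by (simp add: markov_cyl_def delta_append_tl)

lemma delta_drop:
  assumes "i < length u"
  shows "delta P (drop i u) = (\<Prod>j\<in>{Suc i..length u - 1}. P (u ! (j - 1)) (u ! j))"
proof -
  have "{Suc i..length u - 1} = {0 + Suc i..<(length u - Suc i) + Suc i}" using assms by auto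
  then have "(\<Prod>j\<in>{Suc i..length u - 1}. P (u ! (j - 1)) (u ! j))
      = (\<Prod>k\<in>{0..<length u - Suc i}. P (u ! (k + i)) (u ! Suc (k + i)))"
    by (simp only: prod.shift_bounds_nat_ivl) simp
  then show ?thesis
    unfolding delta_def using assms by (simp add: add.commute)
qed

lemma corr_delta_eq_delta_drop:
  assumes "1 \<le> length v - s" and "length v - s \<le> length u"
  shows "corr_delta P s v u = delta P (drop (length v - s - 1) u)"
  using delta_drop[of "length v - s - 1" u P] assms unfolding corr_delta_def
  by (simp add: Suc_diff_Suc)

lemma sublist_imp_suffix_or_sublist_butlast:
  assumes "sublist g z"
  shows "suffix g z \<or> sublist g (butlast z)"
proof -
  obtain ps ss where z: "z = ps @ g @ ss" using assms by (auto simp: sublist_def)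
  show ?thesis
  proof (cases "ss = []")
    case False
    then have "butlast z = ps @ g @ butlast ss" using z by (simp add: butlast_append)
    then show ?thesis by (metis sublist_appendI)
  qed (use z in \<open>auto simp: suffix_def\<close>)
qed

lemma sublist_butlast_imp_sublist: "sublist g (butlast z) \<Longrightarrow> sublist g z"
  by (meson sublist_butlast sublist_order.order_trans)

lemma avoids_sublist: "avoids G z \<Longrightarrow> sublist y z \<Longrightarrow> avoids G y"
  unfolding avoids_def by (meson sublist_order.order_trans)

lemma avoids_last: "avoids G w \<Longrightarrow> w \<noteq> [] \<Longrightarrow> [last w] \<notin> G"
  unfolding avoids_def by (metis append_butlast_last_id sublist_append_leftI)

lemma finite_words_of_length: "finite {w. length w = n \<and> set w \<subseteq> alphabet N}"
  using finite_lists_length_eq[of "alphabet N" n] by (simp add: alphabet_def conj_commute)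

lemma first_at_endD:
  assumes "first_at_end G u w"
  shows "suffix u w" and "w = ps @ u @ ss \<Longrightarrow> ss = []" and "g \<in> G \<Longrightarrow> g \<noteq> u \<Longrightarrow> \<not> sublist g w"
  using assms unfolding first_at_end_def by blast+

lemma avoids_butlast_if_first_at_end:
  assumes "first_at_end G v y" and "v \<noteq> []"
  shows "avoids G (butlast y)"
  unfolding avoids_def
proof (intro ballI notI)
  fix g assume g: "g \<in> G" "sublist g (butlast y)"
  have "y \<noteq> []" using first_at_endD(1)[OF assms(1)] assms(2) by auto
  show False
  proof (cases "g = v")
    case True
    then obtain ps ss where "butlast y = ps @ v @ ss" using g(2) unfolding sublist_def by blast
    then have "y = ps @ v @ (ss @ [last y])" using \<open>y \<noteq> []\<close> by (metis append_assoc append_butlast_last_id)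
    then show False using first_at_endD(2)[OF assms(1)] by blast
  qed (use first_at_endD(3)[OF assms(1) g(1)] sublist_butlast_imp_sublist g(2) in blast)
qed

lemma first_at_end_prefix_unique:
  assumes "x @ r = x' @ r'" and "length x \<le> length x'"
    and "first_at_end G v x" and "first_at_end G v' x'" and "v \<in> G"
  shows "x = x' \<and> v = v'"
proof -
  obtain d where d: "x' = x @ d" using assms(1,2)
    by (metis append_eq_append_conv_if append_take_drop_id take_all_iff)
  obtain x0 where "x = x0 @ v" using first_at_endD(1)[OF assms(3)] unfolding suffix_def by blast
  with d have x': "x' = x0 @ v @ d" by simp
  then have "v = v'" using first_at_endD(3)[OF assms(4) assms(5)] by blast
  moreover have "d = []" using first_at_endD(2)[OF assms(4)] x' calculation by blast
  ultimately show ?thesis using d by simp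
qed

locale forbidden_words =
  fixes N :: nat and A :: "nat \<Rightarrow> nat \<Rightarrow> nat" and G :: "nat list set"
  assumes finite_G: "finite G"
    and G_nonempty: "\<And>w. w \<in> G \<Longrightarrow> w \<noteq> []"
    and G_allowed: "\<And>w. w \<in> G \<Longrightarrow> allowed N A w"
    and reduced_G: "reduced G"
begin

lemma sublist_eq: "u \<in> G \<Longrightarrow> v \<in> G \<Longrightarrow> sublist u v \<Longrightarrow> u = v"
  using reduced_G unfolding reduced_def by blast

lemma suffix_unique: "g \<in> G \<Longrightarrow> g' \<in> G \<Longrightarrow> suffix g y \<Longrightarrow> suffix g' y \<Longrightarrow> g = g'"
  by (metis suffix_same_cases suffix_imp_sublist sublist_eq)

lemma first_at_end_if_avoids_butlast:
  assumes "avoids G (butlast y)" and g: "g \<in> G" "sublist g y"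
  shows "first_at_end G g y"
proof -
  have not_in_butlast: "\<not> sublist h (butlast y)" if "h \<in> G" for h
    using assms(1) that unfolding avoids_def by blast
  have suffix_if: "suffix h y" if "h \<in> G" "sublist h y" for h
    using sublist_imp_suffix_or_sublist_butlast[OF that(2)] not_in_butlast[OF that(1)] by blast
  have "ss = []" if "y = ps @ g @ ss" for ps ss
  proof (rule ccontr)
    assume "ss \<noteq> []"
    then have "butlast y = ps @ g @ butlast ss" using that by (simp add: butlast_append)
    then show False using not_in_butlast[OF g(1)] by (metis sublist_appendI)
  qed
  moreover have "\<not> sublist h y" if "h \<in> G" "h \<noteq> g" for h
    using suffix_if suffix_unique g that by blast
  ultimately show ?thesis unfolding first_at_end_def using suffix_if[OF g] by blast
qed

lemma shortest_hitting_prefix: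
  assumes "g \<in> G" and "sublist g y"
  obtains L v where "L \<le> length y" and "v \<in> G" and "first_at_end G v (take L y)"
proof -
  define hits where "hits l \<longleftrightarrow> (\<exists>g\<in>G. sublist g (take l y))" for l
  define L where "L = (LEAST l. hits l)"
  have "hits (length y)" using assms unfolding hits_def by auto
  then have hit: "hits L" and "L \<le> length y"
    unfolding L_def by (auto intro: LeastI Least_le)
  then obtain v where v: "v \<in> G" "sublist v (take L y)" unfolding hits_def by blast
  have "\<not> hits (L - 1)"
  proof
    assume "hits (L - 1)"
    moreover have "L \<noteq> 0"
    proof
      assume "L = 0"
      then show False using v G_nonempty by simp
    qed
    ultimately show False using not_less_Least[of "L - 1" hits] unfolding L_def by simp
  qed
  then have "avoids G (butlast (take L y))"
    using \<open>L \<le> length y\<close> unfolding hits_def avoids_def by (simp add: butlast_take)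
  then show ?thesis using that \<open>L \<le> length y\<close> v first_at_end_if_avoids_butlast by blast
qed

end

definition avoiding_words :: "nat \<Rightarrow> (nat \<Rightarrow> nat \<Rightarrow> nat) \<Rightarrow> nat list set \<Rightarrow> nat \<Rightarrow> nat \<Rightarrow> nat list set"
  where "avoiding_words N A G n i =
    {w. length w = n \<and> set w \<subseteq> alphabet N \<and> allowed N A w \<and> w \<noteq> [] \<and> last w = i \<and> avoids G w}"

definition first_hit_words :: "nat \<Rightarrow> (nat \<Rightarrow> nat \<Rightarrow> nat) \<Rightarrow> nat list set \<Rightarrow> nat \<Rightarrow> nat list \<Rightarrow> nat list set"
  where "first_hit_words N A G n u =
    {w. length w = n \<and> set w \<subseteq> alphabet N \<and> allowed N A w \<and> first_at_end G u w}"

definition avoiding_prefix_words :: "nat \<Rightarrow> (nat \<Rightarrow> nat \<Rightarrow> nat) \<Rightarrow> nat list set \<Rightarrow> nat \<Rightarrow> nat \<Rightarrow> nat list set"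
  where "avoiding_prefix_words N A G m i =
    {y. length y = Suc m \<and> set y \<subseteq> alphabet N \<and> allowed N A y \<and> last y = i \<and> avoids G (butlast y)}"

lemma mu_end_eq_sum: "mu_end N A p P G n i = sum (markov_cyl p P) (avoiding_words N A G n i)"
  by (simp add: mu_end_def avoiding_words_def)

lemma nu_end_eq_sum: "nu_end N A p P G n u = sum (markov_cyl p P) (first_hit_words N A G n u)"
  by (simp add: nu_end_def first_hit_words_def)

lemma finite_avoiding_words: "finite (avoiding_words N A G n i)"
  by (rule finite_subset[OF _ finite_words_of_length[of n N]]) (auto simp: avoiding_words_def)

lemma finite_first_hit_words: "finite (first_hit_words N A G n u)"
  by (rule finite_subset[OF _ finite_words_of_length[of n N]]) (auto simp: first_hit_words_def)

lemma mu_end_0: "mu_end N A p P G 0 i = 0"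
  unfolding mu_end_def by (simp cong: conj_cong)

lemma first_hit_words_short: "n < length v \<Longrightarrow> first_hit_words N A G n v = {}"
  unfolding first_hit_words_def using first_at_endD(1) suffix_length_le by fastforce

lemma nu_end_short: "n < length v \<Longrightarrow> nu_end N A p P G n v = 0"
  by (simp add: nu_end_eq_sum first_hit_words_short)

lemma F_series_nth: "F_series N A p P G i $ n = mu_end N A p P G n i"
  by (cases n) (simp_all add: F_series_def mu_end_0)

lemma G_series_nth: "v \<noteq> [] \<Longrightarrow> G_series N A p P G v $ n = nu_end N A p P G n v"
  by (cases n) (simp_all add: G_series_def nu_end_short)

lemma avoiding_prefix_words_eq_image:
  assumes zo: "zero_one_mat N A" and irr: "irreducible_mat N A"
    and m: "1 \<le> m" and i: "i \<in> alphabet N"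
  shows "avoiding_prefix_words N A G m i = (\<lambda>w. w @ [i]) `
    {w. length w = m \<and> set w \<subseteq> alphabet N \<and> allowed N A w \<and> avoids G w \<and> A (last w) i = 1}"
    (is "_ = _ ` ?B")
proof
  show "avoiding_prefix_words N A G m i \<subseteq> (\<lambda>w. w @ [i]) ` ?B"
  proof
    fix y assume y: "y \<in> avoiding_prefix_words N A G m i"
    define w where "w = butlast y"
    have "y \<noteq> []" "last y = i" "length y = Suc m"
      using y unfolding avoiding_prefix_words_def by auto
    then have y_def: "y = w @ [i]" and lw: "length w = m"
      unfolding w_def by (metis append_butlast_last_id, simp)
    have "A (y ! (m - 1)) (y ! Suc (m - 1)) = 1"
      using allowed_nth_transition[of N A y "m - 1"] y m lw y_def
      by (simp add: avoiding_prefix_words_def)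
    moreover have "y ! (m - 1) = last w"
      using lw m unfolding y_def by (cases w rule: rev_cases) (auto simp: nth_append)
    moreover have "y ! Suc (m - 1) = i"
      using lw m unfolding y_def by (simp add: nth_append)
    ultimately have "A (last w) i = 1" by simp
    moreover have "allowed N A w" using y allowed_butlast unfolding w_def avoiding_prefix_words_def by blast
    ultimately have "w \<in> ?B" using y lw unfolding w_def avoiding_prefix_words_def
      by (auto dest: in_set_butlastD)
    then show "y \<in> (\<lambda>w. w @ [i]) ` ?B" unfolding y_def by blast
  qed
next
  show "(\<lambda>w. w @ [i]) ` ?B \<subseteq> avoiding_prefix_words N A G m i"
  proof
    fix y assume "y \<in> (\<lambda>w. w @ [i]) ` ?B"
    then obtain w where w: "w \<in> ?B" and y: "y = w @ [i]" by blast
    have "w \<noteq> []" using w m by auto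
    then have "last w \<in> alphabet N" using w by auto
    then have "allowed N A [last w, i]" using allowed_transition_pair[OF zo irr i] w by simp
    then have "allowed N A (w @ tl [last w, i])"
      using allowed_append_tl[of N A w "[last w, i]"] w \<open>w \<noteq> []\<close> by simp
    then show "y \<in> avoiding_prefix_words N A G m i"
      using w i y by (auto simp: avoiding_prefix_words_def)
  qed
qed

lemma sum_avoiding_prefix_words_last_step:
  assumes zo: "zero_one_mat N A" and irr: "irreducible_mat N A"
    and rs: "row_stochastic_compatible N A P" and m: "1 \<le> m" and i: "i \<in> alphabet N"
  shows "sum (markov_cyl p P) (avoiding_prefix_words N A G m i)
       = (\<Sum>j\<in>alphabet N - {a. [a] \<in> G}. mu_end N A p P G m j * P j i)"
proof -
  define Av where "Av = {w. length w = m \<and> set w \<subseteq> alphabet N \<and> allowed N A w \<and> avoids G w}"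
  define B where "B = {w \<in> Av. A (last w) i = 1}"
  have nonempty: "w \<noteq> []" if "w \<in> Av" for w using that m by (auto simp: Av_def)
  have "finite Av" by (rule finite_subset[OF _ finite_words_of_length[of m N]]) (auto simp: Av_def)
  have "sum (markov_cyl p P) (avoiding_prefix_words N A G m i) = (\<Sum>w\<in>B. markov_cyl p P (w @ [i]))"
    unfolding avoiding_prefix_words_eq_image[OF zo irr m i]
    by (subst sum.reindex) (auto simp: inj_on_def B_def Av_def)
  also have "\<dots> = (\<Sum>w\<in>B. markov_cyl p P w * P (last w) i)"
    using markov_cyl_append_tl[of _ "[last _, i]" p P] nonempty by (intro sum.cong) (auto simp: B_def)
  also have "\<dots> = (\<Sum>w\<in>Av. markov_cyl p P w * P (last w) i)"
  proof (rule sum.mono_neutral_left[OF \<open>finite Av\<close>])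
    have "P (last w) i = 0" if "w \<in> Av - B" for w
    proof -
      have "last w \<in> alphabet N" "A (last w) i \<noteq> 1"
        using that nonempty[of w] by (auto simp: Av_def B_def)
      then show ?thesis using rs i unfolding row_stochastic_compatible_def by force
    qed
    then show "\<forall>w\<in>Av - B. markov_cyl p P w * P (last w) i = 0" by simp
  qed (auto simp: B_def)
  also have "\<dots> = (\<Sum>j\<in>alphabet N - {a. [a] \<in> G}. \<Sum>w\<in>{w \<in> Av. last w = j}. markov_cyl p P w * P (last w) i)"
  proof (rule sum.group[symmetric, OF \<open>finite Av\<close>])
    show "finite (alphabet N - {a. [a] \<in> G})" by (simp add: alphabet_def)
    show "last ` Av \<subseteq> alphabet N - {a. [a] \<in> G}"
      using nonempty by (fastforce simp: Av_def dest: avoids_last)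
  qed
  also have "\<dots> = (\<Sum>j\<in>alphabet N - {a. [a] \<in> G}. mu_end N A p P G m j * P j i)"
  proof (rule sum.cong[OF refl])
    fix j
    have "{w \<in> Av. last w = j} = avoiding_words N A G m j"
      using nonempty by (auto simp: Av_def avoiding_words_def)
    then show "(\<Sum>w\<in>{w \<in> Av. last w = j}. markov_cyl p P w * P (last w) i) = mu_end N A p P G m j * P j i"
      by (auto simp: mu_end_eq_sum sum_distrib_right intro: sum.cong)
  qed
  finally show ?thesis .
qed

context forbidden_words
begin

lemma avoiding_prefix_words_split:
  assumes "[i] \<notin> G"
  shows "avoiding_prefix_words N A G m i = avoiding_words N A G (Suc m) i
           \<union> (\<Union>v\<in>{v\<in>G. 2 \<le> length v \<and> last v = i}. first_hit_words N A G (Suc m) v)"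
    (is "?Y = ?M \<union> ?U")
proof
  show "?Y \<subseteq> ?M \<union> ?U"
  proof
    fix y assume y: "y \<in> ?Y"
    show "y \<in> ?M \<union> ?U"
    proof (cases "avoids G y")
      case True
      then show ?thesis using y by (auto simp: avoiding_prefix_words_def avoiding_words_def)
    next
      case False
      then obtain g where g: "g \<in> G" "sublist g y" unfolding avoids_def by blast
      have hit: "first_at_end G g y"
        using first_at_end_if_avoids_butlast y g by (simp add: avoiding_prefix_words_def)
      have "last g = i"
        using first_at_endD(1)[OF hit] G_nonempty[OF g(1)] y
        by (auto simp: suffix_def avoiding_prefix_words_def)
      moreover have "length g \<noteq> 1"
        using assms g(1) \<open>last g = i\<close> by (auto simp: length_Suc_conv)
      moreover have "length g \<noteq> 0" using G_nonempty[OF g(1)] by simp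
      ultimately have "2 \<le> length g" by linarith
      then have "g \<in> {v\<in>G. 2 \<le> length v \<and> last v = i}" using g(1) \<open>last g = i\<close> by simp
      moreover have "y \<in> first_hit_words N A G (Suc m) g"
        using y hit by (simp add: avoiding_prefix_words_def first_hit_words_def)
      ultimately show ?thesis by blast
    qed
  qed
next
  have "y \<in> ?Y" if "y \<in> ?M" for y
    using that avoids_sublist[of G y "butlast y"]
    by (auto simp: avoiding_prefix_words_def avoiding_words_def)
  moreover have "y \<in> ?Y" if "v \<in> G" "last v = i" "y \<in> first_hit_words N A G (Suc m) v" for v y
  proof -
    have hit: "first_at_end G v y" using that(3) by (simp add: first_hit_words_def)
    have "last y = i"
      using first_at_endD(1)[OF hit] G_nonempty[OF that(1)] that(2) by (auto simp: suffix_def)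
    then show ?thesis
      using that(3) avoids_butlast_if_first_at_end[OF hit G_nonempty[OF that(1)]]
      by (simp add: avoiding_prefix_words_def first_hit_words_def)
  qed
  ultimately show "?M \<union> ?U \<subseteq> ?Y" by blast
qed

lemma sum_avoiding_prefix_words_first_hit:
  assumes "[i] \<notin> G"
  shows "sum (markov_cyl p P) (avoiding_prefix_words N A G m i)
       = mu_end N A p P G (Suc m) i
         + (\<Sum>v\<in>{v\<in>G. 2 \<le> length v}. if i = last v then nu_end N A p P G (Suc m) v else 0)"
proof -
  let ?V = "{v\<in>G. 2 \<le> length v \<and> last v = i}"
  have "finite ?V" using finite_G by simp
  have "first_hit_words N A G (Suc m) v \<inter> first_hit_words N A G (Suc m) v' = {}"
    if "v \<in> ?V" "v' \<in> ?V" "v \<noteq> v'" for v v'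
    using that first_at_endD(1,3) by (fastforce simp: first_hit_words_def)
  then have "sum (markov_cyl p P) (\<Union>v\<in>?V. first_hit_words N A G (Suc m) v)
      = (\<Sum>v\<in>?V. nu_end N A p P G (Suc m) v)"
    unfolding nu_end_eq_sum using \<open>finite ?V\<close> finite_first_hit_words by (subst sum.UNION_disjoint) auto
  also have "\<dots> = (\<Sum>v\<in>{v\<in>G. 2 \<le> length v}. if i = last v then nu_end N A p P G (Suc m) v else 0)"
    using finite_G by (subst sum.inter_filter[symmetric]) (auto intro: sum.cong)
  finally have "sum (markov_cyl p P) (\<Union>v\<in>?V. first_hit_words N A G (Suc m) v) = \<dots>" .
  moreover have "avoiding_words N A G (Suc m) i \<inter> (\<Union>v\<in>?V. first_hit_words N A G (Suc m) v) = {}"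
    by (fastforce simp: avoiding_words_def first_hit_words_def avoids_def dest: first_at_endD(1))
  ultimately show ?thesis
    unfolding avoiding_prefix_words_split[OF assms] mu_end_eq_sum
    by (simp add: sum.union_disjoint finite_avoiding_words finite_first_hit_words \<open>finite ?V\<close>)
qed

lemma mu_end_1:
  assumes "zero_one_mat N A" and "irreducible_mat N A" and i: "i \<in> alphabet N" and "[i] \<notin> G"
  shows "mu_end N A p P G 1 i = p i"
proof -
  have "avoids G [i]"
    unfolding avoids_def
  proof (intro ballI notI)
    fix g assume "g \<in> G" "sublist g [i]"
    then show False using G_nonempty[of g] assms(4) by (auto simp: sublist_Cons_right prefix_Cons)
  qed
  then have "avoiding_words N A G 1 i = {[i]}"
    using allowed_singleton[OF assms(1-3)] i by (auto simp: avoiding_words_def length_Suc_conv)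
  then show ?thesis by (simp add: mu_end_eq_sum markov_cyl_def)
qed

lemma mu_end_recursion:
  assumes zo: "zero_one_mat N A" and irr: "irreducible_mat N A"
    and rs: "row_stochastic_compatible N A P" and i: "i \<in> alphabet N" and iG: "[i] \<notin> G"
  shows "mu_end N A p P G n i - p i * (if n = 1 then 1 else 0)
     + (\<Sum>v\<in>{v\<in>G. 2 \<le> length v}. if i = last v then nu_end N A p P G n v else 0)
     = (if n = 0 then 0 else (\<Sum>j\<in>alphabet N - {a. [a] \<in> G}. mu_end N A p P G (n - 1) j * P j i))"
proof -
  consider "n \<le> 1" | m where "n = Suc m" "1 \<le> m" by (cases n) (auto, linarith)
  then show ?thesis
  proof cases
    case 1
    then have "(\<Sum>v\<in>{v\<in>G. 2 \<le> length v}. if i = last v then nu_end N A p P G n v else 0) = 0"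
      by (intro sum.neutral) (auto intro: nu_end_short)
    then show ?thesis using 1 mu_end_1[OF zo irr i iG] by (auto simp: mu_end_0 le_Suc_eq)
  next
    case 2
    then show ?thesis unfolding \<open>n = Suc m\<close>
      using sum_avoiding_prefix_words_first_hit[OF iG, where m=m and p=p and P=P]
        sum_avoiding_prefix_words_last_step[OF zo irr rs \<open>1 \<le> m\<close> i, where G=G and p=p] by simp
  qed
qed

lemma F_series_recursion:
  assumes "zero_one_mat N A" and "irreducible_mat N A"
    and "row_stochastic_compatible N A P" and i: "i \<in> alphabet N - {a. [a] \<in> G}"
  shows "F_series N A p P G i - fps_const (p i) * fps_X
           + (\<Sum>v\<in>{v\<in>G. 2 \<le> length v}. (if i = last v then 1 else 0) * G_series N A p P G v)
         = fps_X * (\<Sum>j\<in>alphabet N - {a. [a] \<in> G}. F_series N A p P G j * fps_const (P j i))"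
proof (rule fps_ext)
  fix n
  have "(F_series N A p P G i - fps_const (p i) * fps_X) $ n
      = mu_end N A p P G n i - p i * (if n = 1 then 1 else 0)"
    by (simp add: F_series_nth)
  moreover have "(\<Sum>v\<in>{v\<in>G. 2 \<le> length v}. (if i = last v then 1 else 0) * G_series N A p P G v) $ n
      = (\<Sum>v\<in>{v\<in>G. 2 \<le> length v}. if i = last v then nu_end N A p P G n v else 0)"
    unfolding fps_sum_nth by (intro sum.cong) (auto intro: G_series_nth)
  moreover have "(fps_X * (\<Sum>j\<in>alphabet N - {a. [a] \<in> G}. F_series N A p P G j * fps_const (P j i))) $ n
      = (if n = 0 then 0 else (\<Sum>j\<in>alphabet N - {a. [a] \<in> G}. mu_end N A p P G (n - 1) j * P j i))"
    by (simp add: fps_sum_nth F_series_nth)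
  ultimately show "(F_series N A p P G i - fps_const (p i) * fps_X
           + (\<Sum>v\<in>{v\<in>G. 2 \<le> length v}. (if i = last v then 1 else 0) * G_series N A p P G v)) $ n
         = (fps_X * (\<Sum>j\<in>alphabet N - {a. [a] \<in> G}. F_series N A p P G j * fps_const (P j i))) $ n"
    using mu_end_recursion[OF assms(1-3), where i=i and n=n and p=p] i by simp
qed

end

definition overlaps :: "nat list \<Rightarrow> nat list \<Rightarrow> nat set" where
  "overlaps v u = {s. s < length v - 1 \<and> corr_c s v u = 1}"

lemma tau_tilde_eq_sum_overlaps:
  assumes v: "v \<noteq> []" and u: "u \<noteq> []"
  shows "tau_tilde P v u
       = (\<Sum>s\<in>overlaps v u. fps_const (corr_delta P s v u) * fps_X ^ (length u + s - length v))"
proof -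
  define S where "S = (if length v < length u then {0..length v - 1} else {length v - length u..length v - 1})"
  define t where "t s = fps_const (corr_c s v u * corr_delta P s v u) * (fps_X :: real fps) ^ (length u + s - length v)" for s
  let ?top = "length v - 1"
  have "length v - length u \<le> ?top" using u by (cases u) auto
  then have "finite S" "?top \<in> S" unfolding S_def by auto
  have "corr_delta P ?top v u = delta P u"
    using v u corr_delta_eq_delta_drop[of v ?top u P] by (simp add: Suc_le_eq)
  moreover have "length u + ?top - length v = length u - 1" using v by (cases v) auto
  ultimately have top: "t ?top = fps_X ^ (length u - 1) * fps_const (corr_c ?top v u * delta P u)"
    unfolding t_def by (simp add: mult.commute)
  have overlaps_eq: "{s \<in> S - {?top}. corr_c s v u = 1} = overlaps v u"
    unfolding S_def overlaps_def by (auto simp: corr_c_def split: if_splits)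
  have "tau P v u = t ?top + (\<Sum>s\<in>S - {?top}. t s)"
    unfolding tau_def Let_def S_def[symmetric] t_def[symmetric] by (rule sum.remove[OF \<open>finite S\<close> \<open>?top \<in> S\<close>])
  also have "(\<Sum>s\<in>S - {?top}. t s) = (\<Sum>s\<in>overlaps v u. t s)"
    unfolding overlaps_eq[symmetric] using \<open>finite S\<close>
    by (intro sum.mono_neutral_right) (auto simp: t_def corr_c_def)
  also have "\<dots> = (\<Sum>s\<in>overlaps v u. fps_const (corr_delta P s v u) * fps_X ^ (length u + s - length v))"
    by (rule sum.cong) (simp_all add: t_def overlaps_def)
  finally show ?thesis unfolding tau_tilde_def top by simp
qed

lemma tau_tilde_G_series_nth:
  assumes "v \<noteq> []" and "u \<noteq> []"
  shows "(tau_tilde P v u * G_series N A p P G v) $ n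
       = (\<Sum>s\<in>overlaps v u. \<Sum>x\<in>first_hit_words N A G (n - (length u + s - length v)) v.
            corr_delta P s v u * markov_cyl p P x)"
proof -
  have "(fps_X ^ e * G_series N A p P G v) $ n = nu_end N A p P G (n - e) v" for e
    using assms(1) nu_end_short[of 0 v] by (simp add: fps_X_power_mult_nth G_series_nth)
  then show ?thesis
    unfolding tau_tilde_eq_sum_overlaps[OF assms] sum_distrib_right fps_sum_nth
    by (simp add: mult.assoc nu_end_eq_sum sum_distrib_left)
qed

text \<open>A triple \<open>(v, s, x)\<close> stands for the word \<open>x @ drop (length v - s) u\<close> of length \<open>n\<close>.\<close>

definition overlap_triples ::
    "nat \<Rightarrow> (nat \<Rightarrow> nat \<Rightarrow> nat) \<Rightarrow> nat list set \<Rightarrow> nat list \<Rightarrow> nat \<Rightarrow> (nat list \<times> nat \<times> nat list) set"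
  where "overlap_triples N A G u n =
    (SIGMA v:{v\<in>G. 2 \<le> length v}. SIGMA s:overlaps v u.
       first_hit_words N A G (n - (length u + s - length v)) v)"

definition overlap_prefix :: "nat list \<Rightarrow> nat \<Rightarrow> nat list \<times> nat \<times> nat list \<Rightarrow> nat list" where
  "overlap_prefix u n t = take (n + 1 - length u) (snd (snd t))"

lemma overlap_triplesD:
  assumes "(v, s, x) \<in> overlap_triples N A G u n"
  shows "v \<in> G" and "2 \<le> length v" and "s < length v - 1" and "length v - s \<le> length u"
    and "drop s v = take (length v - s) u" and "length x = n - (length u + s - length v)"
    and "allowed N A x" and "first_at_end G v x"
  using assms
  by (auto simp: overlap_triples_def overlaps_def first_hit_words_def corr_c_def split: if_splits)

lemma overlap_triple_decomp:
  assumes t: "(v, s, x) \<in> overlap_triples N A G u n"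
  obtains x1 where "x = x1 @ take (length v - s) u" and "overlap_prefix u n (v, s, x) = x1 @ [hd u]"
    and "2 \<le> length v - s" and "length v - s \<le> length u"
proof -
  note t_props = overlap_triplesD[OF t]
  define k where "k = length v - s"
  have k: "2 \<le> k" "k \<le> length u" "k \<le> length v" using t_props(3,4) unfolding k_def by auto
  have "suffix (take k u) x"
    using t_props(5) first_at_endD(1)[OF t_props(8)] suffix_drop[of s v]
    unfolding k_def by (metis suffix_order.order_trans)
  then obtain x1 where x1: "x = x1 @ take k u" unfolding suffix_def by blast
  have "length v \<le> length x" using first_at_endD(1)[OF t_props(8)] by (rule suffix_length_le)
  then have "length u \<le> n" "length x1 = n - length u" using t_props(6) x1 k unfolding k_def by auto
  then have "overlap_prefix u n (v, s, x) = x1 @ take 1 (take k u)"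
    unfolding overlap_prefix_def x1 using k by (simp add: take_append)
  also have "take 1 (take k u) = [hd u]" using k by (cases u) auto
  finally show ?thesis using that x1 k unfolding k_def by blast
qed

lemma overlap_prefix_append_tl:
  assumes "(v, s, x) \<in> overlap_triples N A G u n"
  shows "x @ drop (length v - s) u = overlap_prefix u n (v, s, x) @ tl u"
proof -
  obtain x1 where "x = x1 @ take (length v - s) u" "overlap_prefix u n (v, s, x) = x1 @ [hd u]"
    "2 \<le> length v - s" "length v - s \<le> length u"
    using overlap_triple_decomp[OF assms] .
  then show ?thesis by (cases u) auto
qed

lemma overlap_prefix_in_avoiding_words:
  assumes t: "(v, s, x) \<in> overlap_triples N A G u n"
  shows "overlap_prefix u n (v, s, x) \<in> avoiding_words N A G (n + 1 - length u) (hd u)"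
proof -
  note t_props = overlap_triplesD[OF t]
  obtain x1 where x1: "x = x1 @ take (length v - s) u" "overlap_prefix u n (v, s, x) = x1 @ [hd u]"
    and k: "2 \<le> length v - s" "length v - s \<le> length u"
    using overlap_triple_decomp[OF t] .
  have "take k u = hd u # tl (take k u) \<and> tl (take k u) \<noteq> []" if "2 \<le> k" "k \<le> length u" for k
    using that by (cases u; cases k) (auto simp: Suc_le_eq)
  then obtain r where "take (length v - s) u = hd u # r" "r \<noteq> []"
    using k by blast
  then have "butlast x = (x1 @ [hd u]) @ butlast r" unfolding x1(1) by (simp add: butlast_append)
  then have "prefix (x1 @ [hd u]) (butlast x)" by (rule prefixI)
  moreover have "avoids G (butlast x)"
    using t_props(2) by (intro avoids_butlast_if_first_at_end[OF t_props(8)]) auto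
  ultimately have "avoids G (x1 @ [hd u])"
    using avoids_sublist prefix_imp_sublist by blast
  moreover have "allowed N A (overlap_prefix u n (v, s, x))"
    unfolding overlap_prefix_def using allowed_take[OF t_props(7)] by simp
  moreover have "length (overlap_prefix u n (v, s, x)) = n + 1 - length u"
    using t_props(6) x1 k unfolding overlap_prefix_def by auto
  ultimately show ?thesis
    using x1(2) allowed_set_subset[of N A "x1 @ [hd u]"] by (simp add: avoiding_words_def)
qed

lemma overlap_prefix_weight:
  assumes t: "(v, s, x) \<in> overlap_triples N A G u n"
  shows "corr_delta P s v u * markov_cyl p P x = delta P u * markov_cyl p P (overlap_prefix u n (v, s, x))"
proof -
  obtain x1 where x1: "x = x1 @ take (length v - s) u"
    and k: "2 \<le> length v - s" "length v - s \<le> length u"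
    using overlap_triple_decomp[OF t] by blast
  define k where "k = length v - s"
  have k: "2 \<le> k" "k \<le> length u" using k unfolding k_def by auto
  have "last x = hd (drop (k - 1) u)"
    using k unfolding x1 k_def[symmetric] by (subst last_append) (auto simp: last_conv_nth hd_drop_conv_nth)
  moreover have "tl (drop (k - 1) u) = drop k u" using k by (cases k) (auto simp: drop_Suc tl_drop)
  moreover have "x \<noteq> []" "drop (k - 1) u \<noteq> []" using k x1 unfolding k_def by auto
  ultimately have "markov_cyl p P (x @ drop k u) = markov_cyl p P x * corr_delta P s v u"
    using markov_cyl_append_tl[of x "drop (k - 1) u" p P] corr_delta_eq_delta_drop[of v s u P] k
    unfolding k_def by simp
  moreover have "markov_cyl p P (overlap_prefix u n (v, s, x) @ tl u)
      = markov_cyl p P (overlap_prefix u n (v, s, x)) * delta P u"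
  proof -
    obtain x1 where "overlap_prefix u n (v, s, x) = x1 @ [hd u]"
      using overlap_triple_decomp[OF t] by blast
    moreover have "u \<noteq> []" using k by auto
    ultimately show ?thesis using markov_cyl_append_tl[of "x1 @ [hd u]" u p P] by simp
  qed
  ultimately show ?thesis
    using overlap_prefix_append_tl[OF t] unfolding k_def by (simp add: mult.commute)
qed

lemma inj_on_overlap_prefix: "inj_on (overlap_prefix u n) (overlap_triples N A G u n)"
proof (rule inj_onI)
  fix t t' assume t: "t \<in> overlap_triples N A G u n" and t': "t' \<in> overlap_triples N A G u n"
    and eq: "overlap_prefix u n t = overlap_prefix u n t'"
  obtain v s x v' s' x' where t_eq: "t = (v, s, x)" and t'_eq: "t' = (v', s', x')" by (cases t, cases t')
  note props = overlap_triplesD[OF t[unfolded t_eq]] and props' = overlap_triplesD[OF t'[unfolded t'_eq]]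
  have glue: "x @ drop (length v - s) u = x' @ drop (length v' - s') u"
    using overlap_prefix_append_tl[OF t[unfolded t_eq]] overlap_prefix_append_tl[OF t'[unfolded t'_eq]]
      eq t_eq t'_eq by simp
  have "x = x' \<and> v = v'"
  proof (cases "length x \<le> length x'")
    case True
    show ?thesis using first_at_end_prefix_unique[OF glue True props(8) props'(8) props(1)] .
  next
    case False
    then show ?thesis
      using first_at_end_prefix_unique[OF glue[symmetric] _ props'(8) props(8) props'(1)] by simp
  qed
  moreover from this have "length (drop (length v - s) u) = length (drop (length v' - s') u)"
    using glue by simp
  ultimately show "t = t'" using props(3,4) props'(3,4) t_eq t'_eq by auto
qed

context forbidden_words
begin

lemma suffix_overlap:
  assumes "u \<in> G" and "v \<in> G" and "suffix v (x0 @ take k u)" and "k \<le> length u"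
  shows "k \<le> length v" and "drop (length v - k) v = take k u"
proof -
  show k: "k \<le> length v"
  proof (rule ccontr)
    assume "\<not> k \<le> length v"
    then have "suffix v (take k u)"
      using assms(3) assms(4) by (auto simp: suffix_append dest: suffix_length_le)
    then have "v = u" using assms(1,2) sublist_eq by (meson sublist_order.order_trans sublist_take suffix_imp_sublist)
    then show False using \<open>\<not> k \<le> length v\<close> assms(4) by simp
  qed
  obtain z where z: "x0 @ take k u = z @ v" using assms(3) unfolding suffix_def by blast
  have "drop (length (z @ v) - k) (z @ v) = drop (length v - k) v" using k by simp
  moreover have "drop (length (x0 @ take k u) - k) (x0 @ take k u) = take k u" using assms(4) by simp
  ultimately show "drop (length v - k) v = take k u" using z by simp
qed

lemma overlap_triple_of_first_hit:
  assumes u: "u \<in> G" and v: "v \<in> G" and hit: "first_at_end G v (x0 @ take k u)"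
    and allowed: "allowed N A (x0 @ take k u)" and k: "2 \<le> k" "k \<le> length u"
  shows "(v, length v - k, x0 @ take k u) \<in> overlap_triples N A G u (length x0 + length u)"
proof -
  have "k \<le> length v" and overlap: "drop (length v - k) v = take k u"
    using suffix_overlap[OF u v first_at_endD(1)[OF hit] k(2)] by auto
  then have "length v - k \<in> overlaps v u"
    using k unfolding overlaps_def corr_c_def by auto
  moreover have "length x0 + length u - (length u + (length v - k) - length v) = length (x0 @ take k u)"
    using k \<open>k \<le> length v\<close> by simp
  ultimately show ?thesis
    using v k \<open>k \<le> length v\<close> hit allowed allowed_set_subset[OF allowed]
    by (simp add: overlap_triples_def first_hit_words_def)
qed

lemma overlap_prefix_surj:
  assumes u: "u \<in> G" "2 \<le> length u" and w: "w \<in> avoiding_words N A G (n + 1 - length u) (hd u)"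
  shows "w \<in> overlap_prefix u n ` overlap_triples N A G u n"
proof -
  define m where "m = n + 1 - length u"
  have w_props: "length w = m" "allowed N A w" "w \<noteq> []" "last w = hd u" "avoids G w"
    using w unfolding avoiding_words_def m_def by auto
  then have "1 \<le> m" by (cases w) auto
  then have n: "n = length (butlast w) + length u" using w_props(1) unfolding m_def by auto
  have "u \<noteq> []" using u(2) by auto
  define y where "y = butlast w @ u"
  have y_glue: "y = w @ tl u"
    using w_props(3,4) \<open>u \<noteq> []\<close> unfolding y_def by (cases u) (auto simp: append_butlast_last_id)
  have "allowed N A y"
    unfolding y_glue
    by (rule allowed_append_tl[OF w_props(2) G_allowed[OF u(1)] w_props(3) \<open>u \<noteq> []\<close> w_props(4)])
  obtain L v where L: "L \<le> length y" and v: "v \<in> G" and hit: "first_at_end G v (take L y)"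
    using shortest_hitting_prefix[OF u(1), of y] unfolding y_def by auto
  have "m < L"
  proof (rule ccontr)
    assume "\<not> m < L"
    then have "sublist (take L y) w" unfolding y_glue using w_props(1) by (simp add: take_append)
    then show False using first_at_endD(1)[OF hit] v w_props(5) unfolding avoids_def
      by (meson sublist_order.order_trans suffix_imp_sublist)
  qed
  define k where "k = L - m + 1"
  have k: "2 \<le> k" "k \<le> length u" using \<open>m < L\<close> \<open>1 \<le> m\<close> L n w_props(1) unfolding k_def y_def by auto
  have x_eq: "take L y = butlast w @ take k u"
    using w_props(1) \<open>m < L\<close> \<open>1 \<le> m\<close> unfolding y_def k_def by (simp add: take_append Suc_diff_le)
  have "allowed N A (butlast w @ take k u)"
    using allowed_take[OF \<open>allowed N A y\<close>, of L] unfolding x_eq .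
  then have "(v, length v - k, take L y) \<in> overlap_triples N A G u n"
    unfolding x_eq n by (rule overlap_triple_of_first_hit[OF u(1) v hit[unfolded x_eq] _ k])
  moreover have "overlap_prefix u n (v, length v - k, take L y) = w"
    using \<open>m < L\<close> w_props(1) unfolding overlap_prefix_def y_glue m_def[symmetric] by simp
  ultimately show ?thesis by force
qed

lemma bij_betw_overlap_prefix:
  assumes "u \<in> G" and "2 \<le> length u"
  shows "bij_betw (overlap_prefix u n) (overlap_triples N A G u n)
           (avoiding_words N A G (n + 1 - length u) (hd u))"
  unfolding bij_betw_def
  using inj_on_overlap_prefix overlap_prefix_in_avoiding_words overlap_prefix_surj[OF assms]
  by fast

lemma F_series_correlation_nth:
  assumes u: "u \<in> G" "2 \<le> length u"
  shows "(fps_X ^ (length u - 1) * fps_const (delta P u) * F_series N A p P G (hd u)) $ n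
       = (\<Sum>v\<in>{v\<in>G. 2 \<le> length v}. tau_tilde P v u * G_series N A p P G v) $ n"
proof -
  have "(fps_X ^ (length u - 1) * fps_const (delta P u) * F_series N A p P G (hd u)) $ n
      = delta P u * mu_end N A p P G (n + 1 - length u) (hd u)"
    using u(2) by (cases "n < length u - 1") (auto simp: mult.assoc fps_X_power_mult_nth F_series_nth mu_end_0)
  also have "\<dots> = (\<Sum>t\<in>overlap_triples N A G u n. delta P u * markov_cyl p P (overlap_prefix u n t))"
    unfolding mu_end_eq_sum sum_distrib_left
    by (rule sum.reindex_bij_betw[OF bij_betw_overlap_prefix[OF u], symmetric])
  also have "\<dots> = (\<Sum>(v, s, x)\<in>overlap_triples N A G u n. corr_delta P s v u * markov_cyl p P x)"
    by (intro sum.cong) (auto simp: overlap_prefix_weight)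
  also have "\<dots> = (\<Sum>v\<in>{v\<in>G. 2 \<le> length v}. \<Sum>s\<in>overlaps v u.
        \<Sum>x\<in>first_hit_words N A G (n - (length u + s - length v)) v. corr_delta P s v u * markov_cyl p P x)"
    unfolding overlap_triples_def using finite_G finite_first_hit_words
    by (simp add: sum.Sigma overlaps_def)
  also have "\<dots> = (\<Sum>v\<in>{v\<in>G. 2 \<le> length v}. tau_tilde P v u * G_series N A p P G v) $ n"
    unfolding fps_sum_nth
  proof (rule sum.cong[OF refl])
    fix v assume "v \<in> {v\<in>G. 2 \<le> length v}"
    then have "v \<noteq> []" "u \<noteq> []" using u(2) by auto
    then show "(\<Sum>s\<in>overlaps v u. \<Sum>x\<in>first_hit_words N A G (n - (length u + s - length v)) v.
        corr_delta P s v u * markov_cyl p P x) = (tau_tilde P v u * G_series N A p P G v) $ n"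
      by (simp add: tau_tilde_G_series_nth)
  qed
  finally show ?thesis .
qed

end

theorem theorem4p5:
  fixes N :: nat and A :: "nat \<Rightarrow> nat \<Rightarrow> nat" and P :: "nat \<Rightarrow> nat \<Rightarrow> real"
    and p :: "nat \<Rightarrow> real" and G :: "nat list set"
  assumes "zero_one_mat N A" and "irreducible_mat N A"
    and "row_stochastic_compatible N A P"
    and "stationary N P p"
    and "finite G" and "\<forall>w\<in>G. w \<noteq> [] \<and> allowed N A w" and "reduced G"
  shows "(\<forall>i\<in>alphabet N - {a. [a] \<in> G}.
            F_series N A p P G i - fps_const (p i) * fps_X
              + (\<Sum>v\<in>{v\<in>G. length v \<ge> 2}. (if i = last v then 1 else 0) * G_series N A p P G v)
            = fps_X * (\<Sum>j\<in>alphabet N - {a. [a] \<in> G}. F_series N A p P G j * fps_const (P j i)))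
       \<and> (\<forall>u\<in>{v\<in>G. length v \<ge> 2}.
            fps_X ^ (length u - 1) * fps_const (delta P u) * F_series N A p P G (hd u)
            = (\<Sum>v\<in>{v\<in>G. length v \<ge> 2}. tau_tilde P v u * G_series N A p P G v))"
proof -
  interpret forbidden_words N A G
    using assms(5-7) by unfold_locales auto
  show ?thesis
    using F_series_recursion[OF assms(1-3)] F_series_correlation_nth by (auto intro: fps_ext)
qed

end
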